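(* Let $(\alpha_N)_{N\in\mathbb{N}}$ be an increasing sequence of positive real numbers with $\alpha_N\to\infty$. Let $\{[a_1,b_1),[a_2,b_2),\dots\}$ be a countable collection of pairwise disjoint intervals contained in $[0,1]$ with $\sum_n(b_n-a_n)=l\leq1$. Let $Z$ be a standard normal random variable. Then for every $N$, $$\left|\mathbb{P}\Big(\alpha_N Z\in\bigcup_{k\in\mathbb{Z}}\bigcup_{n}[a_n+k,b_n+k)\Big)-l\right|<4\exp(-2\pi^2\alpha_N^2).$$ *)

theory Defs
  imports "HOL-Probability.Probability"
begin

end

theory Submission
  imports Defs
begin

(* Write \<sigma> = alpha N. The set U = \<Union>k \<in> \<int>. \<Union>n. [a n + k, b n + k) is 1-periodic and
   U \<inter> [0, 1) = S = \<Union>n. [a n, b n), a set of measure l. Folding the density of \<sigma> Z onto [0, 1)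
   gives P(\<sigma> Z \<in> U) = \<integral>\<^sub>S W, where W x = \<Sum>k \<in> \<int>. \<phi>\<^sub>\<sigma>(x + k) is the wrapped normal density.
   The Fourier coefficients of W are values of the characteristic function of \<sigma> Z, so by uniqueness
   of Fourier coefficients (Poisson summation) W x = 1 + 2 \<Sum>m\<ge>1. q^(m\<^sup>2) cos (2 \<pi> m x)
   with q = exp (-2 \<pi>\<^sup>2 \<sigma>\<^sup>2). Hence |W - 1| \<le> 2q/(1 - q) and |P(\<sigma> Z \<in> U) - l| \<le> 2q/(1 - q) l,
   which is below 4q when q \<le> 1/4; for q > 1/4 the trivial bound 1 suffices. *)

lemma set_integral_FTC_real:
  fixes f F :: "real \<Rightarrow> real"
  assumes "a \<le> b" and "\<And>x. (F has_real_derivative f x) (at x)" and "continuous_on {a..b} f"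
  shows "(LBINT x:{a..b}. f x) = F b - F a"
  unfolding set_lebesgue_integral_def
  by (rule integral_FTC_atLeastAtMost)
     (use assms in \<open>auto simp: has_real_derivative_iff_has_vector_derivative[symmetric]
                          intro: has_field_derivative_at_within\<close>)

lemma set_integral_reflect_01:
  fixes f :: "real \<Rightarrow> real"
  shows "(LBINT x:{0..1}. f (1 - x)) = (LBINT x:{0..1}. f x)"
proof -
  have "(LBINT x:{0..1}. f x) = \<bar>- 1\<bar> *\<^sub>R (LBINT x:{0..1}. f (1 + - 1 * x))"
    unfolding set_lebesgue_integral_def
    by (subst lborel_integral_real_affine[where c="-1" and t=1])
       (auto intro!: Bochner_Integration.integral_cong split: split_indicator)
  then show ?thesis by simp
qed

lemma continuous_on_reflect_01:
  fixes D :: "real \<Rightarrow> 'a::topological_space"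
  assumes "continuous_on {0..1} D"
  shows "continuous_on {0..1} (\<lambda>x. D (1 - x))"
proof -
  have "continuous_on {0..1} (\<lambda>x::real. 1 - x)"
    by (intro continuous_intros)
  then show ?thesis
    by (rule continuous_on_compose2[OF assms]) auto
qed

lemma set_integral_closed_open_unit:
  fixes f :: "real \<Rightarrow> real"
  assumes [measurable]: "f \<in> borel_measurable borel"
  shows "(LBINT x:{0..<1}. f x) = (LBINT x:{0..1}. f x)"
  unfolding set_lebesgue_integral_def
proof (rule integral_cong_AE)
  show "AE x in lborel. indicator {0..<1} x *\<^sub>R f x = indicator {0..1} x *\<^sub>R f x"
    using AE_lborel_singleton[of 1] by eventually_elim (auto simp: indicator_def)
qed measurable

lemma cos_2pi_int_reflect:
  fixes k :: int
  shows "cos (2 * pi * k * (1 - x)) = cos (2 * pi * k * x)"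
proof -
  have "2 * pi * k * (1 - x) = 2 * pi * k - 2 * pi * k * x"
    by (simp add: algebra_simps)
  then show ?thesis
    using cos_int_2pin[of k] sin_int_2pin[of k] by (simp add: cos_diff)
qed

lemma sin_2pi_int_reflect:
  fixes k :: int
  shows "sin (2 * pi * k * (1 - x)) = - sin (2 * pi * k * x)"
proof -
  have "2 * pi * k * (1 - x) = 2 * pi * k - 2 * pi * k * x"
    by (simp add: algebra_simps)
  then show ?thesis
    using cos_int_2pin[of k] sin_int_2pin[of k] by (simp add: sin_diff)
qed

lemma cos_2pi_int_shift:
  fixes m k :: int and x :: real
  shows "cos (2 * pi * m * (x + k)) = cos (2 * pi * m * x)"
proof -
  have "2 * pi * m * (x + k) = 2 * pi * m * x + 2 * pi * of_int (m * k)"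
    by (simp add: algebra_simps)
  moreover have "cos (2 * pi * of_int (m * k)) = 1" "sin (2 * pi * of_int (m * k)) = 0"
    by (rule cos_int_2pin, rule sin_int_2pin)
  ultimately show ?thesis
    by (simp only: cos_add)
qed

lemma sin_2pi_int_shift:
  fixes m k :: int and x :: real
  shows "sin (2 * pi * m * (x + k)) = sin (2 * pi * m * x)"
proof -
  have "2 * pi * m * (x + k) = 2 * pi * m * x + 2 * pi * of_int (m * k)"
    by (simp add: algebra_simps)
  moreover have "cos (2 * pi * of_int (m * k)) = 1" "sin (2 * pi * of_int (m * k)) = 0"
    by (rule cos_int_2pin, rule sin_int_2pin)
  ultimately show ?thesis
    by (simp only: sin_add)
qed

lemma set_integral_cos_2pi_int:
  fixes k :: int
  shows "(LBINT x:{0..1}. cos (2 * pi * k * x)) = (if k = 0 then 1 else 0)"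
proof (cases "k = 0")
  case False
  have "(LBINT x:{0..1}. cos (2 * pi * k * x))
      = sin (2 * pi * k * 1) / (2 * pi * k) - sin (2 * pi * k * 0) / (2 * pi * k)"
    by (rule set_integral_FTC_real)
       (use False in \<open>auto intro!: derivative_eq_intros continuous_intros\<close>)
  then show ?thesis
    using False sin_int_2pin[of k] by simp
next
  case True
  then show ?thesis
    by (simp add: set_lebesgue_integral_def)
qed

lemma set_integral_sin_2pi_int:
  fixes k :: int
  shows "(LBINT x:{0..1}. sin (2 * pi * k * x)) = 0"
proof (cases "k = 0")
  case False
  have "(LBINT x:{0..1}. sin (2 * pi * k * x))
      = - cos (2 * pi * k * 1) / (2 * pi * k) - - cos (2 * pi * k * 0) / (2 * pi * k)"
    by (rule set_integral_FTC_real)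
       (use False in \<open>auto intro!: derivative_eq_intros continuous_intros\<close>)
  then show ?thesis
    using cos_int_2pin[of k] by simp
qed simp

lemma set_integral_cos_cos_2pi_nat:
  fixes j k :: nat
  shows "(LBINT x:{0..1}. cos (2 * pi * j * x) * cos (2 * pi * k * x))
       = (if j = k then if k = 0 then 1 else 1 / 2 else 0)"
proof -
  have "cos (2 * pi * j * x) * cos (2 * pi * k * x)
      = cos (2 * pi * (int j - int k) * x) / 2 + cos (2 * pi * (int j + int k) * x) / 2" for x
    by (simp add: cos_times_cos algebra_simps add_divide_distrib)
  then have "(LBINT x:{0..1}. cos (2 * pi * j * x) * cos (2 * pi * k * x))
      = (LBINT x:{0..1}. cos (2 * pi * (int j - int k) * x)) / 2
        + (LBINT x:{0..1}. cos (2 * pi * (int j + int k) * x)) / 2"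
    by (simp add: borel_integrable_atLeastAtMost' continuous_intros)
  then show ?thesis
    by (simp only: set_integral_cos_2pi_int) auto
qed

lemma set_integral_cos_sin_2pi_nat:
  fixes j k :: nat
  shows "(LBINT x:{0..1}. cos (2 * pi * j * x) * sin (2 * pi * k * x)) = 0"
proof -
  have "cos (2 * pi * j * x) * sin (2 * pi * k * x)
      = sin (2 * pi * (int j + int k) * x) / 2 - sin (2 * pi * (int j - int k) * x) / 2" for x
    by (simp add: cos_times_sin algebra_simps diff_divide_distrib)
  then have "(LBINT x:{0..1}. cos (2 * pi * j * x) * sin (2 * pi * k * x))
      = (LBINT x:{0..1}. sin (2 * pi * (int j + int k) * x)) / 2
        - (LBINT x:{0..1}. sin (2 * pi * (int j - int k) * x)) / 2"
    by (simp add: borel_integrable_atLeastAtMost' continuous_intros)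
  then show ?thesis
    using set_integral_sin_2pi_int[of "int j + int k"] set_integral_sin_2pi_int[of "int j - int k"]
    by simp
qed

section \<open>Uniqueness of Fourier coefficients\<close>

lemma cos_power_times_cos_orthogonal:
  fixes k :: int
  assumes F: "continuous_on {0..1} F"
    and orth: "\<And>k::int. (LBINT x:{0..1}. F x * cos (2 * pi * k * x)) = 0"
  shows "(LBINT x:{0..1}. F x * (cos (2 * pi * x) ^ n * cos (2 * pi * k * x))) = 0"
proof (induction n arbitrary: k)
  case 0
  show ?case using orth by simp
next
  case (Suc n)
  let ?g = "\<lambda>j x. F x * (cos (2 * pi * x) ^ n * cos (2 * pi * of_int j * x))"
  have halve: "u * (v * ((A + B) / 2)) = u * (v * A) / 2 + u * (v * B) / 2" for u v A B :: real
    by (simp add: ring_distribs add_divide_distrib)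
  have "F x * (cos (2 * pi * x) ^ Suc n * cos (2 * pi * k * x)) = ?g (k - 1) x / 2 + ?g (k + 1) x / 2" for x
  proof -
    have "2 * pi * k * x - 2 * pi * x = 2 * pi * of_int (k - 1) * x"
      and "2 * pi * k * x + 2 * pi * x = 2 * pi * of_int (k + 1) * x"
      by (simp_all add: algebra_simps)
    then have product: "cos (2 * pi * x) * cos (2 * pi * k * x)
        = (cos (2 * pi * of_int (k - 1) * x) + cos (2 * pi * of_int (k + 1) * x)) / 2"
      using cos_times_cos[of "2 * pi * k * x" "2 * pi * x"] by (simp only: mult.commute)
    have "F x * (cos (2 * pi * x) ^ Suc n * cos (2 * pi * k * x))
        = F x * (cos (2 * pi * x) ^ n * (cos (2 * pi * x) * cos (2 * pi * k * x)))"
      by (simp add: mult_ac)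
    also have "\<dots> = ?g (k - 1) x / 2 + ?g (k + 1) x / 2"
      unfolding product by (rule halve)
    finally show ?thesis .
  qed
  moreover have "set_integrable lborel {0..1} (?g j)" for j
    by (intro borel_integrable_atLeastAtMost' continuous_intros F)
  ultimately show ?case
    using Suc.IH by (simp del: of_int_add of_int_diff)
qed

lemma polynomial_of_cos_orthogonal:
  assumes F: "continuous_on {0..1} F"
    and orth: "\<And>k::int. (LBINT x:{0..1}. F x * cos (2 * pi * k * x)) = 0"
    and p: "real_polynomial_function p"
  shows "(LBINT x:{0..1}. F x * p (cos (2 * pi * x))) = 0"
proof -
  obtain c n where p_eq: "p = (\<lambda>y. \<Sum>i\<le>n. c i * y ^ i)"
    using p by (auto simp: real_polynomial_function_iff_sum)
  let ?m = "\<lambda>i x. indicator {0..1} x *\<^sub>R (F x * cos (2 * pi * x) ^ i)"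
  have "set_integrable lborel {0..1} (\<lambda>x. F x * cos (2 * pi * x) ^ i)" for i
    by (intro borel_integrable_atLeastAtMost' continuous_intros F)
  then have "integrable lborel (?m i)" for i
    by (simp add: set_integrable_def)
  moreover have "integral\<^sup>L lborel (?m i) = 0" for i
    using cos_power_times_cos_orthogonal[OF F orth, of i 0] by (simp add: set_lebesgue_integral_def)
  moreover have "indicator {0..1} x *\<^sub>R (F x * p (cos (2 * pi * x))) = (\<Sum>i\<le>n. c i * ?m i x)" for x
    by (simp add: p_eq sum_distrib_left algebra_simps)
  ultimately show ?thesis
    by (simp add: set_lebesgue_integral_def)
qed

lemma symmetric_eq_arccos_cos:
  assumes x: "x \<in> {0..1}" and sym: "\<And>x. x \<in> {0..1} \<Longrightarrow> F (1 - x) = F x"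
  shows "F x = F (arccos (cos (2 * pi * x)) / (2 * pi))"
proof (cases "x \<le> 1/2")
  case True
  then have "arccos (cos (2 * pi * x)) = 2 * pi * x"
    using x by (intro arccos_cos) auto
  then show ?thesis by simp
next
  case False
  have "cos (2 * pi * x) = cos (2 * pi * (1 - x))"
    using cos_2pi_int_reflect[of 1 x] by simp
  moreover have "arccos (cos (2 * pi * (1 - x))) = 2 * pi * (1 - x)"
    using x False by (intro arccos_cos) auto
  ultimately show ?thesis
    using sym[OF x] by simp
qed

lemma continuous_on_comp_arccos_scaled:
  assumes "continuous_on {0..1} F"
  shows "continuous_on {-1..1} (\<lambda>y. F (arccos y / (2 * pi)))"
proof (rule continuous_on_compose2[OF assms])
  show "continuous_on {-1..1} (\<lambda>y. arccos y / (2 * pi))"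
    by (intro continuous_intros continuous_on_arccos') auto
  show "(\<lambda>y. arccos y / (2 * pi)) ` {-1..1} \<subseteq> {0..1}"
  proof (rule image_subsetI)
    fix y :: real
    assume "y \<in> {-1..1}"
    then have "0 \<le> arccos y" "arccos y \<le> pi"
      using arccos_lbound arccos_ubound by auto
    then show "arccos y / (2 * pi) \<in> {0..1}"
      by (auto simp: field_simps)
  qed
qed

lemma set_integral_square_le_if_orthogonal_approx:
  fixes F G :: "real \<Rightarrow> real"
  assumes F: "continuous_on {0..1} F" and G: "continuous_on {0..1} G"
    and bound: "\<And>x. x \<in> {0..1} \<Longrightarrow> \<bar>F x\<bar> \<le> B"
    and approx: "\<And>x. x \<in> {0..1} \<Longrightarrow> \<bar>F x - G x\<bar> \<le> e"
    and orth: "(LBINT x:{0..1}. F x * G x) = 0"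
  shows "(LBINT x:{0..1}. F x * F x) \<le> B * e"
proof -
  have FF: "set_integrable lborel {0..1} (\<lambda>x. F x * F x)"
    and FG: "set_integrable lborel {0..1} (\<lambda>x. F x * G x)"
    by (intro borel_integrable_atLeastAtMost' continuous_intros F G)+
  have "(LBINT x:{0..1}. F x * F x) = (LBINT x:{0..1}. F x * F x) - (LBINT x:{0..1}. F x * G x)"
    using orth by simp
  also have "\<dots> = (LBINT x:{0..1}. F x * (F x - G x))"
    using FF FG by (simp add: right_diff_distrib)
  also have "\<dots> \<le> (LBINT x:{0..1::real}. B * e)"
  proof (rule set_integral_mono)
    show "set_integrable lborel {0..1} (\<lambda>x. F x * (F x - G x))"
      using FF FG by (simp add: right_diff_distrib)
    fix x :: real
    assume x: "x \<in> {0..1}"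
    have "\<bar>F x\<bar> * \<bar>F x - G x\<bar> \<le> B * e"
      using bound[OF x] approx[OF x] by (intro mult_mono) auto
    then show "F x * (F x - G x) \<le> B * e"
      by (simp add: abs_mult[symmetric])
  qed (simp add: set_integrable_def)
  also have "\<dots> = B * e"
    by (simp add: set_lebesgue_integral_def)
  finally show ?thesis .
qed

lemma AE_zero_if_set_integral_square_zero:
  fixes F :: "real \<Rightarrow> real"
  assumes "set_integrable lborel A (\<lambda>x. F x * F x)" and "(LBINT x:A. F x * F x) = 0"
  shows "AE x in lborel. x \<in> A \<longrightarrow> F x = 0"
proof -
  have "AE x in lborel. indicator A x *\<^sub>R (F x * F x) = 0"
    using assms unfolding set_integrable_def set_lebesgue_integral_def
    by (subst integral_nonneg_eq_0_iff_AE[symmetric]) (auto simp: indicator_def)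
  then show ?thesis
    by eventually_elim (auto simp: indicator_def)
qed

text \<open>A continuous function on \<open>[0, 1]\<close> that is symmetric about \<open>1/2\<close> is a continuous function of
  \<open>cos (2 * pi * x)\<close>, so by Weierstrass approximation it is a uniform limit of polynomials in
  \<open>cos (2 * pi * x)\<close>, to all of which it is orthogonal.\<close>

lemma symmetric_orthogonal_to_cos_imp_AE_zero:
  assumes F: "continuous_on {0..1} F"
    and sym: "\<And>x. x \<in> {0..1} \<Longrightarrow> F (1 - x) = F x"
    and orth: "\<And>k::int. (LBINT x:{0..1}. F x * cos (2 * pi * k * x)) = 0"
  shows "AE x in lborel. x \<in> {0..1} \<longrightarrow> F x = 0"
proof -
  obtain B where "B > 0" and B: "\<And>x. x \<in> {0..1} \<Longrightarrow> \<bar>F x\<bar> \<le> B"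
    using compact_imp_bounded[OF compact_continuous_image[OF F compact_Icc]]
    by (auto simp: bounded_pos)
  define f where "f y = F (arccos y / (2 * pi))" for y
  have f: "continuous_on {-1..1} f"
    unfolding f_def by (rule continuous_on_comp_arccos_scaled[OF F])
  have F_eq: "F x = f (cos (2 * pi * x))" if "x \<in> {0..1}" for x
    unfolding f_def using symmetric_eq_arccos_cos[of x F, OF that sym] .
  have small: "(LBINT x:{0..1}. F x * F x) \<le> B * e" if "e > 0" for e
  proof -
    obtain p where p: "real_polynomial_function p" "\<And>y. y \<in> {-1..1} \<Longrightarrow> \<bar>f y - p y\<bar> < e"
      using Stone_Weierstrass_real_polynomial_function[OF compact_Icc f \<open>e > 0\<close>] by blast
    have "continuous_on UNIV p"
      using p(1) by (simp add: continuous_on_polymonial_function real_polynomial_function_eq)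
    then have "continuous_on {0..1} (\<lambda>x. p (cos (2 * pi * x)))"
      by (rule continuous_on_compose2) (auto intro!: continuous_intros)
    moreover have "\<bar>F x - p (cos (2 * pi * x))\<bar> \<le> e" if "x \<in> {0..1}" for x
      using p(2)[of "cos (2 * pi * x)"] F_eq[OF that] by simp
    ultimately show ?thesis
      using polynomial_of_cos_orthogonal[OF F orth p(1)] B
      by (intro set_integral_square_le_if_orthogonal_approx[OF F]) auto
  qed
  have "(LBINT x:{0..1}. F x * F x) \<le> 0"
  proof (rule field_le_epsilon)
    fix e :: real
    assume "e > 0"
    then show "(LBINT x:{0..1}. F x * F x) \<le> 0 + e"
      using small[of "e / B"] \<open>B > 0\<close> by simp
  qed
  moreover have "0 \<le> (LBINT x:{0..1}. F x * F x)"
    unfolding set_lebesgue_integral_def by (auto intro!: integral_nonneg_AE simp: indicator_def)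
  ultimately have "(LBINT x:{0..1}. F x * F x) = 0"
    by linarith
  moreover have "set_integrable lborel {0..1} (\<lambda>x. F x * F x)"
    by (intro borel_integrable_atLeastAtMost' continuous_intros F)
  ultimately show ?thesis
    by (intro AE_zero_if_set_integral_square_zero)
qed

lemma set_integral_reflect_cos_01:
  fixes D :: "real \<Rightarrow> real" and k :: int
  shows "(LBINT x:{0..1}. D (1 - x) * cos (2 * pi * k * x)) = (LBINT x:{0..1}. D x * cos (2 * pi * k * x))"
  using set_integral_reflect_01[of "\<lambda>x. D x * cos (2 * pi * k * (1 - x))"]
  by (simp add: cos_2pi_int_reflect)

lemma set_integral_reflect_sin_cos_01:
  fixes D :: "real \<Rightarrow> real" and k :: int
  shows "(LBINT x:{0..1}. D (1 - x) * (sin (2 * pi * x) * cos (2 * pi * k * x)))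
       = - (LBINT x:{0..1}. D x * (sin (2 * pi * x) * cos (2 * pi * k * x)))"
  using set_integral_reflect_01[of "\<lambda>x. D x * (sin (2 * pi * (1 - x)) * cos (2 * pi * k * (1 - x)))"]
    sin_2pi_int_reflect[of 1]
  by (simp add: cos_2pi_int_reflect set_lebesgue_integral_def)

lemma sin_cos_orthogonal_if_sin_orthogonal:
  fixes k :: int
  assumes D: "continuous_on {0..1} D"
    and sin: "\<And>k::int. (LBINT x:{0..1}. D x * sin (2 * pi * k * x)) = 0"
  shows "(LBINT x:{0..1}. D x * (sin (2 * pi * x) * cos (2 * pi * k * x))) = 0"
proof -
  have "D x * (sin (2 * pi * x) * cos (2 * pi * k * x))
      = D x * sin (2 * pi * of_int (1 + k) * x) / 2 + D x * sin (2 * pi * of_int (1 - k) * x) / 2" for x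
    using sin_times_cos[of "2 * pi * x" "2 * pi * k * x"]
    by (simp add: algebra_simps add_divide_distrib)
  moreover have "set_integrable lborel {0..1} (\<lambda>x. D x * sin (2 * pi * of_int j * x))" for j :: int
    by (intro borel_integrable_atLeastAtMost' continuous_intros D)
  ultimately show ?thesis
    using sin by (simp del: of_int_add of_int_diff)
qed

text \<open>The parts \<open>D x + D (1 - x)\<close> and \<open>(D x - D (1 - x)) * sin (2 * pi * x)\<close> are symmetric
  about \<open>1/2\<close>; together they determine \<open>D\<close> wherever \<open>sin (2 * pi * x) \<noteq> 0\<close>.\<close>

lemma fourier_coefficients_zero_imp_AE_zero:
  assumes D: "continuous_on {0..1} D"
    and cos: "\<And>n::nat. (LBINT x:{0..1}. D x * cos (2 * pi * n * x)) = 0"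
    and sin: "\<And>n::nat. (LBINT x:{0..1}. D x * sin (2 * pi * n * x)) = 0"
  shows "AE x in lborel. x \<in> {0..1} \<longrightarrow> D x = 0"
proof -
  have cos_int: "(LBINT x:{0..1}. D x * cos (2 * pi * k * x)) = 0" for k :: int
    using cos[of "nat \<bar>k\<bar>"] by (cases "k \<ge> 0") simp_all
  have "set_integrable lborel {0..1} (\<lambda>x. D x * sin (t * x))" for t
    by (intro borel_integrable_atLeastAtMost' continuous_intros D)
  then have sin_int: "(LBINT x:{0..1}. D x * sin (2 * pi * k * x)) = 0" for k :: int
    using sin[of "nat \<bar>k\<bar>"] by (cases "k \<ge> 0") (simp_all add: set_integral_uminus)
  have DR: "continuous_on {0..1} (\<lambda>x. D (1 - x))"
    by (rule continuous_on_reflect_01[OF D])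
  have integrable: "set_integrable lborel {0..1} (\<lambda>x. G x * cos (2 * pi * k * x))"
    "set_integrable lborel {0..1} (\<lambda>x. G x * (sin (2 * pi * x) * cos (2 * pi * k * x)))"
    if "continuous_on {0..1} G" for G and k :: int
    by (intro borel_integrable_atLeastAtMost' continuous_intros that)+
  define E where "E x = D x + D (1 - x)" for x
  define S where "S x = (D x - D (1 - x)) * sin (2 * pi * x)" for x
  have "AE x in lborel. x \<in> {0..1} \<longrightarrow> E x = 0"
  proof (rule symmetric_orthogonal_to_cos_imp_AE_zero)
    show "continuous_on {0..1} E"
      unfolding E_def by (intro continuous_intros D DR)
    show "(LBINT x:{0..1}. E x * cos (2 * pi * k * x)) = 0" for k :: int
      using integrable(1)[OF D, of k] integrable(1)[OF DR, of k] cos_int[of k]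
      by (simp add: E_def distrib_right set_integral_reflect_cos_01)
  qed (simp add: E_def)
  moreover have "AE x in lborel. x \<in> {0..1} \<longrightarrow> S x = 0"
  proof (rule symmetric_orthogonal_to_cos_imp_AE_zero)
    show "continuous_on {0..1} S"
      unfolding S_def by (intro continuous_intros D DR)
    show "S (1 - x) = S x" for x
      using sin_2pi_int_reflect[of 1 x] by (simp add: S_def algebra_simps)
    show "(LBINT x:{0..1}. S x * cos (2 * pi * k * x)) = 0" for k :: int
      using integrable(2)[OF D, of k] integrable(2)[OF DR, of k]
        sin_cos_orthogonal_if_sin_orthogonal[OF D sin_int, of k] set_integral_reflect_sin_cos_01[of D k]
      by (simp add: S_def left_diff_distrib mult.assoc)
  qed
  ultimately show ?thesis
    using AE_lborel_singleton[of 0] AE_lborel_singleton[of "1/2"] AE_lborel_singleton[of 1]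
  proof eventually_elim
    case (elim x)
    show ?case
    proof
      assume x: "x \<in> {0..1}"
      then have "sin (2 * pi * x) \<noteq> 0"
        using elim by (auto simp: sin_zero_iff_int2 field_simps)
      then show "D x = 0"
        using elim x by (auto simp: E_def S_def)
    qed
  qed
qed

lemma sums_integral_dominated:
  fixes f :: "nat \<Rightarrow> 'a \<Rightarrow> real"
  assumes f: "\<And>n. integrable M (f n)" and g: "integrable M g"
    and bound: "\<And>n x. \<bar>f n x\<bar> \<le> c n * g x" and c: "summable c"
  shows "(\<lambda>n. integral\<^sup>L M (f n)) sums (\<integral>x. (\<Sum>n. f n x) \<partial>M)"
proof (rule sums_integral[OF f])
  show "AE x in M. summable (\<lambda>n. norm (f n x))"
  proof (rule AE_I2)
    fix x
    show "summable (\<lambda>n. norm (f n x))"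
      by (rule summable_comparison_test'[OF summable_mult2[OF c, of "g x"]]) (simp add: bound)
  qed
  have "(\<integral>x. norm (f n x) \<partial>M) \<le> (\<integral>x. c n * g x \<partial>M)" for n
    by (rule integral_mono[OF integrable_norm[OF f] integrable_mult_right[OF g]]) (simp add: bound)
  then show "summable (\<lambda>n. \<integral>x. norm (f n x) \<partial>M)"
    by (intro summable_comparison_test'[OF summable_mult2[OF c, of "integral\<^sup>L M g"]]) simp
qed

lemma summable_cos_series:
  assumes "summable (\<lambda>m. \<bar>c m\<bar>)"
  shows "summable (\<lambda>m. c m * cos (2 * pi * m * x))"
  by (rule summable_comparison_test'[OF assms]) (simp add: abs_mult mult_left_le)

lemma continuous_on_cos_series:
  assumes c: "summable (\<lambda>m. \<bar>c m\<bar>)"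
  shows "continuous_on S (\<lambda>x. \<Sum>m. c m * cos (2 * pi * m * x))"
proof -
  have limit: "uniform_limit S (\<lambda>N x. \<Sum>m<N. c m * cos (2 * pi * m * x))
      (\<lambda>x. \<Sum>m. c m * cos (2 * pi * m * x)) sequentially"
    by (rule Weierstrass_m_test[OF _ c]) (simp add: abs_mult mult_left_le)
  have "continuous_on S (\<lambda>x. \<Sum>m<N. c m * cos (2 * pi * m * x))" for N
    by (intro continuous_intros)
  then show ?thesis
    using uniform_limit_theorem[OF always_eventually limit] by simp
qed

lemma cos_series_sums_set_integral:
  assumes c: "summable (\<lambda>m. \<bar>c m\<bar>)"
    and g: "continuous_on {0..1} g" and g_bound: "\<And>x. x \<in> {0..1} \<Longrightarrow> \<bar>g x\<bar> \<le> 1"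
  shows "(\<lambda>m. c m * (LBINT x:{0..1}. cos (2 * pi * m * x) * g x))
           sums (LBINT x:{0..1}. (\<Sum>m. c m * cos (2 * pi * m * x)) * g x)"
proof -
  let ?f = "\<lambda>m x. indicator {0..1} x *\<^sub>R (c m * cos (2 * pi * m * x) * g x)"
  have bound: "\<bar>?f m x\<bar> \<le> \<bar>c m\<bar> * indicator {0..1} x" for m x
  proof (cases "x \<in> {0..1}")
    case True
    then have "\<bar>c m\<bar> * (\<bar>cos (2 * pi * m * x)\<bar> * \<bar>g x\<bar>) \<le> \<bar>c m\<bar> * (1 * 1)"
      using g_bound by (intro mult_left_mono mult_mono) auto
    with True show ?thesis
      by (simp add: abs_mult mult.assoc)
  qed simp
  have integrable: "integrable lborel (?f m)" for m
    using borel_integrable_atLeastAtMost'[of 0 1 "\<lambda>x. c m * cos (2 * pi * m * x) * g x"] g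
    by (simp add: set_integrable_def continuous_intros)
  have unit: "integrable lborel (indicator {0..1::real} :: real \<Rightarrow> real)"
    by (rule integrable_real_indicator) auto
  have "(\<lambda>m. integral\<^sup>L lborel (?f m)) sums (\<integral>x. (\<Sum>m. ?f m x) \<partial>lborel)"
    by (rule sums_integral_dominated[OF integrable unit bound c])
  moreover have "integral\<^sup>L lborel (?f m) = c m * (LBINT x:{0..1}. cos (2 * pi * m * x) * g x)" for m
    unfolding set_lebesgue_integral_def by (simp flip: integral_mult_right_zero add: mult_ac)
  moreover have "(\<Sum>m. ?f m x) = indicator {0..1} x *\<^sub>R ((\<Sum>m. c m * cos (2 * pi * m * x)) * g x)" for x
  proof -
    have "(\<lambda>m. c m * cos (2 * pi * m * x)) sums (\<Sum>m. c m * cos (2 * pi * m * x))"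
      by (rule summable_sums[OF summable_cos_series[OF c]])
    then have "(\<lambda>m. ?f m x) sums (indicator {0..1} x *\<^sub>R ((\<Sum>m. c m * cos (2 * pi * m * x)) * g x))"
      by (intro sums_scaleR_right sums_mult2)
    then show ?thesis
      by (rule sums_unique[symmetric])
  qed
  ultimately show ?thesis
    by (simp add: set_lebesgue_integral_def)
qed

lemma
  fixes k :: nat
  assumes c: "summable (\<lambda>m. \<bar>c m\<bar>)"
  shows set_integral_cos_series_cos:
      "(LBINT x:{0..1}. (\<Sum>m. c m * cos (2 * pi * m * x)) * cos (2 * pi * k * x))
         = (if k = 0 then c 0 else c k / 2)"
    and set_integral_cos_series_sin:
      "(LBINT x:{0..1}. (\<Sum>m. c m * cos (2 * pi * m * x)) * sin (2 * pi * k * x)) = 0"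
proof -
  have "(\<lambda>m. c m * (LBINT x:{0..1}. cos (2 * pi * m * x) * cos (2 * pi * k * x)))
      sums (LBINT x:{0..1}. (\<Sum>m. c m * cos (2 * pi * m * x)) * cos (2 * pi * k * x))"
    by (rule cos_series_sums_set_integral[OF c]) (intro continuous_intros, simp)
  moreover have "(\<lambda>m. c m * (LBINT x:{0..1}. cos (2 * pi * m * x) * cos (2 * pi * k * x)))
      = (\<lambda>m. if m = k then (if k = 0 then c 0 else c k / 2) else 0)"
    by (rule ext) (simp add: set_integral_cos_cos_2pi_nat)
  ultimately have "(\<lambda>m. if m = k then (if k = 0 then c 0 else c k / 2) else 0)
      sums (LBINT x:{0..1}. (\<Sum>m. c m * cos (2 * pi * m * x)) * cos (2 * pi * k * x))"
    by simp
  from sums_unique2[OF this sums_single]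
  show "(LBINT x:{0..1}. (\<Sum>m. c m * cos (2 * pi * m * x)) * cos (2 * pi * k * x))
      = (if k = 0 then c 0 else c k / 2)" .
  have "(\<lambda>m. c m * (LBINT x:{0..1}. cos (2 * pi * m * x) * sin (2 * pi * k * x)))
      sums (LBINT x:{0..1}. (\<Sum>m. c m * cos (2 * pi * m * x)) * sin (2 * pi * k * x))"
    by (rule cos_series_sums_set_integral[OF c]) (intro continuous_intros, simp)
  then have "(\<lambda>m. 0) sums (LBINT x:{0..1}. (\<Sum>m. c m * cos (2 * pi * m * x)) * sin (2 * pi * k * x))"
    by (simp add: set_integral_cos_sin_2pi_nat)
  from sums_unique2[OF this sums_zero]
  show "(LBINT x:{0..1}. (\<Sum>m. c m * cos (2 * pi * m * x)) * sin (2 * pi * k * x)) = 0" .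
qed

section \<open>The wrapped normal density\<close>

lemma set_integral_translate:
  fixes f :: "real \<Rightarrow> real"
  shows "(LBINT x:{a..<b}. f (x + c)) = (LBINT y:{a + c..<b + c}. f y)"
proof -
  have "(LBINT y:{a + c..<b + c}. f y) = \<bar>1\<bar> *\<^sub>R (LBINT x:{a..<b}. f (c + 1 * x))"
    unfolding set_lebesgue_integral_def
    by (subst lborel_integral_real_affine[where c=1 and t=c])
       (auto intro!: Bochner_Integration.integral_cong split: split_indicator)
  then show ?thesis
    by (simp add: add.commute)
qed

lemma set_integral_unit_translate_pair:
  fixes F :: "real \<Rightarrow> real" and n :: nat
  assumes F: "integrable lborel F"
  shows "(LBINT x:{0..<1}. F (x + n) + F (x - n - 1))
       = (LBINT y:{real n..<real n + 1}. F y) + (LBINT y:{- real n - 1..<- real n}. F y)"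
proof -
  have shifted: "set_integrable lborel {0..<1} (\<lambda>x. F (x + c))" for c
    using integrable_mult_indicator[OF _ lborel_integrable_real_affine[OF F, of 1 c], of "{0..<1}"]
    by (simp add: set_integrable_def add.commute)
  have "set_integrable lborel {0..<1} (\<lambda>x. F (x - n - 1))"
    using shifted[of "- n - 1"] by (simp add: algebra_simps)
  note add = set_integral_add(2)[OF shifted[of n] this]
  have "(LBINT x:{0..<1}. F (x + n)) = (LBINT y:{real n..<real n + 1}. F y)"
    using set_integral_translate[where f=F and a=0 and b=1 and c=n] by (simp add: add.commute)
  moreover have "(LBINT x:{0..<1}. F (x - n - 1)) = (LBINT x:{0..<1}. F (x + (- n - 1)))"
    by (simp add: algebra_simps)
  moreover have "\<dots> = (LBINT y:{- real n - 1..<- real n}. F y)"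
    using set_integral_translate[where f=F and a=0 and b=1 and c="- n - 1"] by simp
  ultimately show ?thesis
    using add by simp
qed

lemma sum_set_integral_unit_translates:
  fixes F :: "real \<Rightarrow> real"
  assumes F: "integrable lborel F"
  shows "(\<Sum>n<N. LBINT x:{0..<1}. F (x + real n) + F (x - real n - 1)) = (LBINT y:{- real N..<real N}. F y)"
proof (induction N)
  case (Suc N)
  have set_int: "set_integrable lborel A F" if "A \<in> sets borel" for A
    using integrable_mult_indicator[OF _ F, of A] that by (simp add: set_integrable_def)
  have "{- real (Suc N)..<real (Suc N)}
      = {- real N..<real N} \<union> ({real N..<real N + 1} \<union> {- real N - 1..<- real N})"
    by auto
  then have "(LBINT y:{- real (Suc N)..<real (Suc N)}. F y)
      = (LBINT y:({- real N..<real N} \<union> ({real N..<real N + 1} \<union> {- real N - 1..<- real N})). F y)"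
    by (simp only:)
  also have "\<dots> = (LBINT y:{- real N..<real N}. F y)
      + (LBINT y:({real N..<real N + 1} \<union> {- real N - 1..<- real N}). F y)"
    by (rule set_integral_Un) (auto intro!: set_integrable_Un set_int)
  also have "(LBINT y:({real N..<real N + 1} \<union> {- real N - 1..<- real N}). F y)
      = (LBINT y:{real N..<real N + 1}. F y) + (LBINT y:{- real N - 1..<- real N}. F y)"
    by (rule set_integral_Un) (auto intro!: set_int)
  finally show ?case
    using Suc.IH by (simp add: set_integral_unit_translate_pair[OF F])
qed (simp add: set_lebesgue_integral_def)

lemma sums_set_integral_unit_translates:
  fixes F :: "real \<Rightarrow> real"
  assumes F: "integrable lborel F"
  shows "(\<lambda>n. LBINT x:{0..<1}. F (x + n) + F (x - n - 1)) sums (LBINT y. F y)"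
proof -
  have "(\<lambda>N. LBINT y:{- real N..<real N}. F y) \<longlonglongrightarrow> (LBINT y:(\<Union>N. {- real N..<real N}). F y)"
    using integrable_mult_indicator[OF _ F]
    by (intro set_integral_cont_up) (auto simp: incseq_def set_integrable_def)
  moreover have "(\<Union>N. {- real N..<real N}) = UNIV"
  proof (intro set_eqI iffI UNIV_I)
    fix y :: real
    obtain N where "\<bar>y\<bar> < real N"
      using reals_Archimedean2 by blast
    then show "y \<in> (\<Union>N. {- real N..<real N})"
      by (auto intro!: exI[of _ N])
  qed
  ultimately show ?thesis
    unfolding sums_def sum_set_integral_unit_translates[OF F] by (simp add: set_lebesgue_integral_def)
qed

lemma normal_density_mono_abs:
  assumes "0 < \<sigma>" and "\<bar>z\<bar> \<le> \<bar>y\<bar>"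
  shows "normal_density 0 \<sigma> y \<le> normal_density 0 \<sigma> z"
proof -
  have "z\<^sup>2 \<le> y\<^sup>2"
    using assms(2) by (simp add: abs_le_square_iff)
  then have "- y\<^sup>2 / (2 * \<sigma>\<^sup>2) \<le> - z\<^sup>2 / (2 * \<sigma>\<^sup>2)"
    using assms(1) by (simp add: divide_right_mono)
  then show ?thesis
    unfolding normal_density_def by (intro mult_left_mono) auto
qed

lemma summable_normal_density_nat:
  assumes "0 < \<sigma>"
  shows "summable (\<lambda>n::nat. normal_density 0 \<sigma> n)"
proof (rule summable_comparison_test)
  let ?r = "exp (- 1 / (2 * \<sigma>\<^sup>2))"
  show "\<exists>N. \<forall>n\<ge>N. norm (normal_density 0 \<sigma> n) \<le> normal_density 0 \<sigma> 0 * ?r ^ n"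
  proof (intro exI allI impI)
    fix n :: nat
    have "real n \<le> (real n)\<^sup>2"
      by (cases n) (auto simp: power2_eq_square)
    then have "- (real n)\<^sup>2 / (2 * \<sigma>\<^sup>2) \<le> real n * (- 1 / (2 * \<sigma>\<^sup>2))"
      using assms by (simp add: divide_right_mono)
    then have "exp (- (real n)\<^sup>2 / (2 * \<sigma>\<^sup>2)) \<le> ?r ^ n"
      by (simp add: exp_of_nat_mult[symmetric])
    then show "norm (normal_density 0 \<sigma> n) \<le> normal_density 0 \<sigma> 0 * ?r ^ n"
      unfolding normal_density_def by (auto intro!: divide_right_mono)
  qed
  show "summable (\<lambda>n. normal_density 0 \<sigma> 0 * ?r ^ n)"
    using assms by (intro summable_mult summable_geometric) auto
qed

lemma continuous_on_normal_density[continuous_intros]: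
  "continuous_on S f \<Longrightarrow> continuous_on S (\<lambda>x. normal_density \<mu> \<sigma> (f x))"
  unfolding normal_density_def divide_inverse by (intro continuous_intros)

text \<open>The sum over \<open>k \<in> \<int>\<close> of \<open>normal_density 0 \<sigma> (x + k)\<close>, with the terms \<open>k = n\<close> and
  \<open>k = -n-1\<close> grouped together.\<close>

definition wrapped_normal_density :: "real \<Rightarrow> real \<Rightarrow> real" where
  "wrapped_normal_density \<sigma> x = (\<Sum>n. normal_density 0 \<sigma> (x + n) + normal_density 0 \<sigma> (x - n - 1))"

lemma normal_density_pair_le:
  fixes n :: nat and x :: real
  assumes "0 < \<sigma>" and "x \<in> {0..1}"
  shows "normal_density 0 \<sigma> (x + n) + normal_density 0 \<sigma> (x - n - 1) \<le> 2 * normal_density 0 \<sigma> n"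
  using normal_density_mono_abs[OF assms(1), of n "x + n"] normal_density_mono_abs[OF assms(1), of n "x - n - 1"]
    assms(2) by fastforce

lemma summable_normal_density_pair:
  fixes x :: real
  assumes "0 < \<sigma>" and "x \<in> {0..1}"
  shows "summable (\<lambda>n. normal_density 0 \<sigma> (x + n) + normal_density 0 \<sigma> (x - n - 1))"
  by (rule summable_comparison_test'[where g="\<lambda>n. 2 * normal_density 0 \<sigma> n"])
     (use assms normal_density_pair_le summable_normal_density_nat in auto)

lemma continuous_on_wrapped_normal_density:
  assumes "0 < \<sigma>"
  shows "continuous_on {0..1} (wrapped_normal_density \<sigma>)"
proof -
  have limit: "uniform_limit {0..1}
      (\<lambda>N x. \<Sum>n<N. normal_density 0 \<sigma> (x + real n) + normal_density 0 \<sigma> (x - real n - 1))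
      (wrapped_normal_density \<sigma>) sequentially"
    unfolding wrapped_normal_density_def[abs_def]
  proof (rule Weierstrass_m_test)
    show "norm (normal_density 0 \<sigma> (x + real n) + normal_density 0 \<sigma> (x - real n - 1))
        \<le> 2 * normal_density 0 \<sigma> n" if "x \<in> {0..1}" for n x
      using normal_density_pair_le[OF assms that, of n] by simp
    show "summable (\<lambda>n. 2 * normal_density 0 \<sigma> (real n))"
      using summable_normal_density_nat[OF assms] by (rule summable_mult)
  qed
  have "continuous_on {0..1}
      (\<lambda>x. \<Sum>n<N. normal_density 0 \<sigma> (x + real n) + normal_density 0 \<sigma> (x - real n - 1))" for N
    by (intro continuous_intros)
  then show ?thesis
    using uniform_limit_theorem[OF always_eventually limit] by simp
qed

lemma borel_measurable_wrapped_normal_density[measurable]: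
  "wrapped_normal_density \<sigma> \<in> borel_measurable borel"
  unfolding wrapped_normal_density_def[abs_def] by measurable

lemma sums_set_integral_wrapped_normal_density:
  fixes h :: "real \<Rightarrow> real"
  assumes \<sigma>: "0 < \<sigma>" and h[measurable]: "h \<in> borel_measurable borel"
    and bounded: "\<And>x. x \<in> {0..<1} \<Longrightarrow> \<bar>h x\<bar> \<le> B"
  shows "(\<lambda>n. LBINT x:{0..<1}. (normal_density 0 \<sigma> (x + real n) + normal_density 0 \<sigma> (x - real n - 1)) * h x)
           sums (LBINT x:{0..<1}. wrapped_normal_density \<sigma> x * h x)"
proof -
  let ?p = "\<lambda>n x. normal_density 0 \<sigma> (x + real n) + normal_density 0 \<sigma> (x - real n - 1)"
  let ?f = "\<lambda>n x. indicator {0..<1} x *\<^sub>R (?p n x * h x)"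
  have bound: "\<bar>?f n x\<bar> \<le> 2 * B * normal_density 0 \<sigma> n * indicator {0..<1} x" for n x
  proof (cases "x \<in> {0..<1}")
    case True
    then have "\<bar>?p n x\<bar> * \<bar>h x\<bar> \<le> (2 * normal_density 0 \<sigma> n) * B"
      using normal_density_pair_le[OF \<sigma>, of x n] bounded[of x]
      by (intro mult_mono) auto
    with True show ?thesis
      by (simp add: abs_mult mult_ac)
  qed simp
  have unit: "integrable lborel (indicator {0..<1::real} :: real \<Rightarrow> real)"
    by (rule integrable_real_indicator) (auto simp: emeasure_lborel_Ico)
  have dominating: "integrable lborel (\<lambda>x::real. 2 * B * normal_density 0 \<sigma> n * indicator {0..<1} x)" for n
    by (intro integrable_mult_right) (simp add: unit)
  have integrable_f: "integrable lborel (?f n)" for n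
  proof (rule Bochner_Integration.integrable_bound[OF dominating[of n]])
    show "AE x in lborel. norm (?f n x) \<le> norm (2 * B * normal_density 0 \<sigma> n * indicator {0..<1} x)"
      using order_trans[OF bound abs_ge_self] by (simp only: real_norm_def AE_I2)
  qed measurable
  have "summable (\<lambda>n. 2 * B * normal_density 0 \<sigma> n)"
    using summable_normal_density_nat[OF \<sigma>] by (rule summable_mult)
  then have "(\<lambda>n. integral\<^sup>L lborel (?f n)) sums (\<integral>x. (\<Sum>n. ?f n x) \<partial>lborel)"
    by (rule sums_integral_dominated[OF integrable_f unit bound])
  moreover have "(\<Sum>n. ?f n x) = indicator {0..<1} x *\<^sub>R (wrapped_normal_density \<sigma> x * h x)" for x
  proof (cases "x \<in> {0..<1}")
    case True
    then show ?thesis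
      using suminf_mult2[OF summable_normal_density_pair[OF \<sigma>, of x], of "h x"]
      by (simp add: wrapped_normal_density_def mult.commute)
  qed simp
  ultimately show ?thesis
    by (simp only: set_lebesgue_integral_def)
qed

lemma integral_normal_density_periodic:
  fixes h :: "real \<Rightarrow> real"
  assumes \<sigma>: "0 < \<sigma>" and h[measurable]: "h \<in> borel_measurable borel"
    and bounded: "\<And>y. \<bar>h y\<bar> \<le> B" and periodic: "\<And>y k::int. h (y + k) = h y"
  shows "(LBINT y. normal_density 0 \<sigma> y * h y) = (LBINT x:{0..<1}. wrapped_normal_density \<sigma> x * h x)"
proof -
  have "integrable lborel (\<lambda>y. B * normal_density 0 \<sigma> y)"
    using \<sigma> by (intro integrable_mult_right integrable_normal_density)
  then have integrable_nd_h: "integrable lborel (\<lambda>y. normal_density 0 \<sigma> y * h y)"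
  proof (rule Bochner_Integration.integrable_bound)
    show "AE y in lborel. norm (normal_density 0 \<sigma> y * h y) \<le> norm (B * normal_density 0 \<sigma> y)"
    proof (intro AE_I2)
      fix y
      have "\<bar>h y\<bar> \<le> \<bar>B\<bar>"
        using bounded[of y] by linarith
      then show "norm (normal_density 0 \<sigma> y * h y) \<le> norm (B * normal_density 0 \<sigma> y)"
        by (simp add: abs_mult mult.commute mult_right_mono)
    qed
  qed simp
  have "h (x + real n) = h x" "h (x - real n - 1) = h x" for x n
    using periodic[of x "int n"] periodic[of x "- int n - 1"] by (simp_all add: algebra_simps)
  then have "(\<lambda>n. LBINT x:{0..<1}. (normal_density 0 \<sigma> (x + real n) + normal_density 0 \<sigma> (x - real n - 1)) * h x)
      sums (LBINT y. normal_density 0 \<sigma> y * h y)"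
    using sums_set_integral_unit_translates[OF integrable_nd_h] by (simp add: distrib_right)
  then show ?thesis
    using sums_set_integral_wrapped_normal_density[OF \<sigma> h bounded] sums_unique2 by blast
qed

lemma integral_std_normal_density_iexp:
  "(\<integral>x. std_normal_density x *\<^sub>R iexp (t * x) \<partial>lborel) = exp (- t\<^sup>2 / 2)"
proof -
  have "char std_normal_distribution t = (\<integral>x. std_normal_density x *\<^sub>R iexp (t * x) \<partial>lborel)"
    unfolding char_def by (subst integral_density) auto
  then show ?thesis
    using char_std_normal_distribution by metis
qed

lemma integral_normal_density_rescale:
  fixes f :: "real \<Rightarrow> real"
  assumes "0 < \<sigma>"
  shows "(LBINT y. normal_density 0 \<sigma> y * f y) = (LBINT z. std_normal_density z * f (\<sigma> * z))"
proof -
  have "(LBINT y. normal_density 0 \<sigma> y * f y)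
      = \<bar>\<sigma>\<bar> *\<^sub>R (LBINT z. normal_density 0 \<sigma> (0 + \<sigma> * z) * f (0 + \<sigma> * z))"
    using assms by (intro lborel_integral_real_affine) simp
  also have "\<dots> = (LBINT z. \<sigma> * normal_density 0 \<sigma> (\<sigma> * z) * f (\<sigma> * z))"
    using assms by (simp add: mult.assoc)
  also have "\<dots> = (LBINT z. std_normal_density z * f (\<sigma> * z))"
  proof (rule Bochner_Integration.integral_cong[OF refl])
    fix z
    have "\<sigma> * normal_density 0 \<sigma> (\<sigma> * z) = std_normal_density z"
      using assms unfolding normal_density_def
      by (simp add: real_sqrt_mult power_mult_distrib field_simps)
    then show "\<sigma> * normal_density 0 \<sigma> (\<sigma> * z) * f (\<sigma> * z) = std_normal_density z * f (\<sigma> * z)"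
      by simp
  qed
  finally show ?thesis .
qed

lemma
  assumes "0 < \<sigma>"
  shows integral_normal_density_cos: "(LBINT y. normal_density 0 \<sigma> y * cos (t * y)) = exp (- (\<sigma> * t)\<^sup>2 / 2)"
    and integral_normal_density_sin: "(LBINT y. normal_density 0 \<sigma> y * sin (t * y)) = 0"
proof -
  let ?g = "\<lambda>z. std_normal_density z *\<^sub>R iexp (\<sigma> * t * z)"
  have integrable: "integrable lborel ?g"
  proof (rule Bochner_Integration.integrable_bound)
    show "integrable lborel std_normal_density"
      by (rule integrable_normal_density) simp
    show "AE z in lborel. norm (?g z) \<le> norm (std_normal_density z)"
      by (intro AE_I2) (simp add: norm_exp_i_times)
  qed measurable
  have "(LBINT y. normal_density 0 \<sigma> y * cos (t * y)) = (LBINT z. Re (?g z))"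
    using integral_normal_density_rescale[OF assms, of "\<lambda>y. cos (t * y)"] by (simp add: Re_exp mult_ac)
  also have "\<dots> = Re (integral\<^sup>L lborel ?g)"
    by (rule integral_Re[OF integrable])
  finally show "(LBINT y. normal_density 0 \<sigma> y * cos (t * y)) = exp (- (\<sigma> * t)\<^sup>2 / 2)"
    using integral_std_normal_density_iexp[of "\<sigma> * t"] by simp
  have "(LBINT y. normal_density 0 \<sigma> y * sin (t * y)) = (LBINT z. Im (?g z))"
    using integral_normal_density_rescale[OF assms, of "\<lambda>y. sin (t * y)"] by (simp add: Im_exp mult_ac)
  also have "\<dots> = Im (integral\<^sup>L lborel ?g)"
    by (rule integral_Im[OF integrable])
  finally show "(LBINT y. normal_density 0 \<sigma> y * sin (t * y)) = 0"
    using integral_std_normal_density_iexp[of "\<sigma> * t"] by simp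
qed

lemma
  fixes n :: nat
  assumes "0 < \<sigma>"
  shows set_integral_wrapped_normal_density_cos:
      "(LBINT x:{0..1}. wrapped_normal_density \<sigma> x * cos (2 * pi * n * x)) = exp (- 2 * pi\<^sup>2 * \<sigma>\<^sup>2 * n\<^sup>2)"
    and set_integral_wrapped_normal_density_sin:
      "(LBINT x:{0..1}. wrapped_normal_density \<sigma> x * sin (2 * pi * n * x)) = 0"
proof -
  have cos_periodic: "cos (2 * pi * n * (y + k)) = cos (2 * pi * n * y)" for y :: real and k :: int
    using cos_2pi_int_shift[of "int n" y k] by simp
  have sin_periodic: "sin (2 * pi * n * (y + k)) = sin (2 * pi * n * y)" for y :: real and k :: int
    using sin_2pi_int_shift[of "int n" y k] by simp
  have "(LBINT x:{0..1}. wrapped_normal_density \<sigma> x * cos (2 * pi * n * x))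
      = (LBINT y. normal_density 0 \<sigma> y * cos (2 * pi * n * y))"
    by (subst integral_normal_density_periodic[OF assms _ _ cos_periodic, where B=1])
       (simp_all add: set_integral_closed_open_unit)
  also have "\<dots> = exp (- 2 * pi\<^sup>2 * \<sigma>\<^sup>2 * n\<^sup>2)"
    using assms by (simp add: integral_normal_density_cos power_mult_distrib)
  finally show "(LBINT x:{0..1}. wrapped_normal_density \<sigma> x * cos (2 * pi * n * x))
      = exp (- 2 * pi\<^sup>2 * \<sigma>\<^sup>2 * n\<^sup>2)" .
  have "(LBINT x:{0..1}. wrapped_normal_density \<sigma> x * sin (2 * pi * n * x))
      = (LBINT y. normal_density 0 \<sigma> y * sin (2 * pi * n * y))"
    by (subst integral_normal_density_periodic[OF assms _ _ sin_periodic, where B=1])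
       (simp_all add: set_integral_closed_open_unit)
  also have "\<dots> = 0"
    using assms by (rule integral_normal_density_sin)
  finally show "(LBINT x:{0..1}. wrapped_normal_density \<sigma> x * sin (2 * pi * n * x)) = 0" .
qed

section \<open>Poisson summation for the normal density\<close>

definition theta_coeff :: "real \<Rightarrow> nat \<Rightarrow> real" where
  "theta_coeff \<sigma> m = (if m = 0 then 1 else 2) * exp (- 2 * pi\<^sup>2 * \<sigma>\<^sup>2 * (real m)\<^sup>2)"

definition theta_series :: "real \<Rightarrow> real \<Rightarrow> real" where
  "theta_series \<sigma> x = (\<Sum>m. theta_coeff \<sigma> m * cos (2 * pi * m * x))"

lemma borel_measurable_theta_series[measurable]: "theta_series \<sigma> \<in> borel_measurable borel"
  unfolding theta_series_def[abs_def] by measurable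

lemma abs_theta_coeff_le: "\<bar>theta_coeff \<sigma> m\<bar> \<le> 2 * exp (- 2 * pi\<^sup>2 * \<sigma>\<^sup>2) ^ m"
proof -
  have "real m \<le> (real m)\<^sup>2"
    by (cases m) (auto simp: power2_eq_square)
  then have "2 * pi\<^sup>2 * \<sigma>\<^sup>2 * real m \<le> 2 * pi\<^sup>2 * \<sigma>\<^sup>2 * (real m)\<^sup>2"
    by (intro mult_left_mono) auto
  then have "- 2 * pi\<^sup>2 * \<sigma>\<^sup>2 * (real m)\<^sup>2 \<le> real m * (- 2 * pi\<^sup>2 * \<sigma>\<^sup>2)"
    by (simp add: algebra_simps)
  then have "exp (- 2 * pi\<^sup>2 * \<sigma>\<^sup>2 * (real m)\<^sup>2) \<le> exp (- 2 * pi\<^sup>2 * \<sigma>\<^sup>2) ^ m"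
    by (simp add: exp_of_nat_mult[symmetric])
  then show ?thesis
    by (auto simp: theta_coeff_def)
qed

lemma summable_abs_theta_coeff:
  assumes "0 < \<sigma>"
  shows "summable (\<lambda>m. \<bar>theta_coeff \<sigma> m\<bar>)"
proof (rule summable_comparison_test')
  show "summable (\<lambda>m. 2 * exp (- 2 * pi\<^sup>2 * \<sigma>\<^sup>2) ^ m)"
    using assms by (intro summable_mult summable_geometric) simp
  show "norm \<bar>theta_coeff \<sigma> m\<bar> \<le> 2 * exp (- 2 * pi\<^sup>2 * \<sigma>\<^sup>2) ^ m" for m
    using abs_theta_coeff_le by simp
qed

lemma abs_theta_series_minus_one_le:
  assumes \<sigma>: "0 < \<sigma>"
  defines "q \<equiv> exp (- 2 * pi\<^sup>2 * \<sigma>\<^sup>2)"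
  shows "\<bar>theta_series \<sigma> x - 1\<bar> \<le> 2 * q / (1 - q)"
proof -
  have q: "0 < q" "q < 1"
    using assms by (auto simp: q_def)
  define f where "f m = theta_coeff \<sigma> m * cos (2 * pi * m * x)" for m
  have f_bound: "\<bar>f (Suc m)\<bar> \<le> 2 * q ^ Suc m" for m
    using abs_theta_coeff_le[of \<sigma> "Suc m"] unfolding f_def q_def abs_mult
    by (rule order_trans[rotated]) (simp add: mult_left_le)
  have geometric: "(\<lambda>m. 2 * q ^ Suc m) sums (2 * q / (1 - q))"
    using sums_mult[OF geometric_sums[of q], of "2 * q"] q by (simp add: mult.assoc)
  have "summable f"
    unfolding f_def by (rule summable_cos_series[OF summable_abs_theta_coeff[OF \<sigma>]])
  moreover have "theta_series \<sigma> x = suminf f"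
    unfolding theta_series_def f_def ..
  moreover have "f 0 = 1"
    by (simp add: f_def theta_coeff_def)
  ultimately have "theta_series \<sigma> x - 1 = (\<Sum>m. f (Suc m))"
    using suminf_split_head[of f] by simp
  also have "\<bar>\<dots>\<bar> \<le> (\<Sum>m. 2 * q ^ Suc m)"
  proof -
    have abs_summable: "summable (\<lambda>m. \<bar>f (Suc m)\<bar>)"
      by (rule summable_comparison_test'[OF sums_summable[OF geometric]]) (simp only: real_norm_def abs_abs f_bound)
    have "\<bar>\<Sum>m. f (Suc m)\<bar> \<le> (\<Sum>m. \<bar>f (Suc m)\<bar>)"
      by (rule summable_rabs[OF abs_summable])
    also have "\<dots> \<le> (\<Sum>m. 2 * q ^ Suc m)"
      by (rule suminf_le[OF f_bound abs_summable sums_summable[OF geometric]])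
    finally show ?thesis .
  qed
  also have "\<dots> = 2 * q / (1 - q)"
    using geometric by (rule sums_unique[symmetric])
  finally show ?thesis .
qed

lemma continuous_on_theta_series: "0 < \<sigma> \<Longrightarrow> continuous_on S (theta_series \<sigma>)"
  unfolding theta_series_def[abs_def] by (rule continuous_on_cos_series[OF summable_abs_theta_coeff])

lemma
  fixes n :: nat
  assumes "0 < \<sigma>"
  shows set_integral_theta_series_cos:
      "(LBINT x:{0..1}. theta_series \<sigma> x * cos (2 * pi * n * x)) = exp (- 2 * pi\<^sup>2 * \<sigma>\<^sup>2 * n\<^sup>2)"
    and set_integral_theta_series_sin:
      "(LBINT x:{0..1}. theta_series \<sigma> x * sin (2 * pi * n * x)) = 0"
  using set_integral_cos_series_cos[OF summable_abs_theta_coeff[OF assms], of n]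
    set_integral_cos_series_sin[OF summable_abs_theta_coeff[OF assms], of n]
  by (simp_all add: theta_series_def theta_coeff_def)

theorem wrapped_normal_density_eq_theta_series:
  assumes "0 < \<sigma>"
  shows "AE x in lborel. x \<in> {0..1} \<longrightarrow> wrapped_normal_density \<sigma> x = theta_series \<sigma> x"
proof -
  have W: "continuous_on {0..1} (wrapped_normal_density \<sigma>)"
    by (rule continuous_on_wrapped_normal_density[OF assms])
  have \<Theta>: "continuous_on {0..1} (theta_series \<sigma>)"
    by (rule continuous_on_theta_series[OF assms])
  have integrable: "set_integrable lborel {0..1} (\<lambda>x. F x * cos (2 * pi * n * x))"
      "set_integrable lborel {0..1} (\<lambda>x. F x * sin (2 * pi * n * x))"
    if "continuous_on {0..1} F" for F and n :: nat
    by (intro borel_integrable_atLeastAtMost' continuous_intros that)+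
  have "AE x in lborel. x \<in> {0..1} \<longrightarrow> wrapped_normal_density \<sigma> x - theta_series \<sigma> x = 0"
  proof (rule fourier_coefficients_zero_imp_AE_zero)
    show "continuous_on {0..1} (\<lambda>x. wrapped_normal_density \<sigma> x - theta_series \<sigma> x)"
      by (intro continuous_intros W \<Theta>)
    show "(LBINT x:{0..1}. (wrapped_normal_density \<sigma> x - theta_series \<sigma> x) * cos (2 * pi * n * x)) = 0" for n :: nat
      using integrable(1)[OF W, of n] integrable(1)[OF \<Theta>, of n] assms
      by (simp add: left_diff_distrib set_integral_wrapped_normal_density_cos set_integral_theta_series_cos)
    show "(LBINT x:{0..1}. (wrapped_normal_density \<sigma> x - theta_series \<sigma> x) * sin (2 * pi * n * x)) = 0" for n :: nat
      using integrable(2)[OF W, of n] integrable(2)[OF \<Theta>, of n] assms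
      by (simp add: left_diff_distrib set_integral_wrapped_normal_density_sin set_integral_theta_series_sin)
  qed
  then show ?thesis
    by simp
qed

lemma prob_scaled_std_normal_in_periodic_set:
  assumes "prob_space M" and Z: "distributed M lborel Z std_normal_density" and \<sigma>: "0 < \<sigma>"
    and U[measurable]: "U \<in> sets borel" and periodic: "\<And>(y::real) (k::int). y + k \<in> U \<longleftrightarrow> y \<in> U"
  shows "measure M {\<omega> \<in> space M. \<sigma> * Z \<omega> \<in> U} = (LBINT x:U \<inter> {0..<1}. theta_series \<sigma> x)"
proof -
  interpret prob_space M
    by fact
  have "distributed M lborel (\<lambda>\<omega>. 0 + \<sigma> * Z \<omega>) (normal_density (0 + \<sigma> * 0) (\<bar>\<sigma>\<bar> * 1))"
    using \<sigma> by (intro normal_density_affine[OF Z]) auto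
  then have scaled: "distributed M lborel (\<lambda>\<omega>. \<sigma> * Z \<omega>) (normal_density 0 \<sigma>)"
    using \<sigma> by simp
  note [measurable] = distributed_measurable[OF scaled]
  have "measure M {\<omega> \<in> space M. \<sigma> * Z \<omega> \<in> U}
      = (\<integral>\<omega>. indicator {\<omega> \<in> space M. \<sigma> * Z \<omega> \<in> U} \<omega> \<partial>M)"
    by (simp add: Int_absorb2)
  also have "\<dots> = (\<integral>\<omega>. indicator U (\<sigma> * Z \<omega>) \<partial>M)"
    by (rule Bochner_Integration.integral_cong) (auto simp: indicator_def)
  also have "\<dots> = (LBINT y. normal_density 0 \<sigma> y * indicator U y)"
    by (rule distributed_integral[OF scaled, symmetric]) auto
  also have "\<dots> = (LBINT x:{0..<1}. wrapped_normal_density \<sigma> x * indicator U x)"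
    using periodic by (intro integral_normal_density_periodic[OF \<sigma>, where B=1]) (auto simp: indicator_def)
  also have "\<dots> = (LBINT x:{0..<1}. theta_series \<sigma> x * indicator U x)"
    unfolding set_lebesgue_integral_def
  proof (rule integral_cong_AE)
    show "AE x in lborel. indicator {0..<1} x *\<^sub>R (wrapped_normal_density \<sigma> x * indicator U x)
        = indicator {0..<1} x *\<^sub>R (theta_series \<sigma> x * indicator U x)"
      using wrapped_normal_density_eq_theta_series[OF \<sigma>] by eventually_elim (auto simp: indicator_def)
  qed measurable
  also have "\<dots> = (LBINT x:U \<inter> {0..<1}. theta_series \<sigma> x)"
    unfolding set_lebesgue_integral_def by (rule Bochner_Integration.integral_cong) (auto simp: indicator_def)
  finally show ?thesis .
qed

lemma abs_set_integral_theta_series_diff_measure_le: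
  assumes \<sigma>: "0 < \<sigma>" and S[measurable]: "S \<in> sets borel" and finite: "emeasure lborel S < \<infinity>"
  defines "q \<equiv> exp (- 2 * pi\<^sup>2 * \<sigma>\<^sup>2)"
  shows "\<bar>(LBINT x:S. theta_series \<sigma> x) - measure lborel S\<bar> \<le> 2 * q / (1 - q) * measure lborel S"
proof -
  define K where "K = 2 * q / (1 - q)"
  have "0 < q" "q < 1"
    using \<sigma> by (auto simp: q_def)
  then have "0 \<le> K"
    by (simp add: K_def)
  have bound: "\<bar>theta_series \<sigma> x - 1\<bar> \<le> K" for x
    unfolding q_def K_def by (rule abs_theta_series_minus_one_le[OF \<sigma>])
  have one: "set_integrable lborel S (\<lambda>x. 1::real)"
    using finite by (simp add: set_integrable_def)
  have K_int: "set_integrable lborel S (\<lambda>x. K)"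
    using finite by (simp add: set_integrable_def)
  have diff: "set_integrable lborel S (\<lambda>x. theta_series \<sigma> x - 1)"
    unfolding set_integrable_def
  proof (rule Bochner_Integration.integrable_bound)
    show "integrable lborel (\<lambda>x. indicator S x *\<^sub>R K)"
      using K_int by (simp add: set_integrable_def)
    show "AE x in lborel. norm (indicator S x *\<^sub>R (theta_series \<sigma> x - 1)) \<le> norm (indicator S x *\<^sub>R K)"
      using bound \<open>0 \<le> K\<close> by (intro AE_I2) (auto simp: indicator_def)
  qed measurable
  have "(LBINT x:S. theta_series \<sigma> x) - measure lborel S = (LBINT x:S. theta_series \<sigma> x - 1)"
  proof -
    have "(LBINT x:S. theta_series \<sigma> x) = (LBINT x:S. (theta_series \<sigma> x - 1) + 1)"
      by simp
    also have "\<dots> = (LBINT x:S. theta_series \<sigma> x - 1) + (LBINT x:S. 1)"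
      by (rule set_integral_add(2)[OF diff one])
    also have "(LBINT x:S. 1) = measure lborel S"
      by (simp add: set_lebesgue_integral_def)
    finally show ?thesis
      by simp
  qed
  also have "\<bar>\<dots>\<bar> \<le> (LBINT x:S. \<bar>theta_series \<sigma> x - 1\<bar>)"
    using set_integral_norm_bound[OF diff] by simp
  also have "\<dots> \<le> (LBINT x:S. K)"
    using diff K_int bound by (intro set_integral_mono) (auto simp: set_integrable_abs)
  also have "\<dots> = K * measure lborel S"
    by (simp add: set_lebesgue_integral_def)
  finally show ?thesis
    by (simp add: K_def)
qed

lemma periodic_union_shift_iff:
  fixes a b :: "nat \<Rightarrow> real" and y :: real and k :: int
  shows "y + k \<in> (\<Union>j::int. \<Union>n. {a n + j..<b n + j}) \<longleftrightarrow> y \<in> (\<Union>j::int. \<Union>n. {a n + j..<b n + j})"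
proof
  assume "y + k \<in> (\<Union>j::int. \<Union>n. {a n + j..<b n + j})"
  then obtain j n where "a n + of_int j \<le> y + k" "y + k < b n + of_int j"
    by auto
  then have "y \<in> {a n + of_int (j - k)..<b n + of_int (j - k)}"
    by auto
  then show "y \<in> (\<Union>j::int. \<Union>n. {a n + j..<b n + j})"
    by blast
next
  assume "y \<in> (\<Union>j::int. \<Union>n. {a n + j..<b n + j})"
  then obtain j n where "a n + of_int j \<le> y" "y < b n + of_int j"
    by auto
  then have "y + k \<in> {a n + of_int (j + k)..<b n + of_int (j + k)}"
    by auto
  then show "y + k \<in> (\<Union>j::int. \<Union>n. {a n + j..<b n + j})"
    by blast
qed

lemma periodic_union_Int_unit:
  fixes a b :: "nat \<Rightarrow> real"
  assumes "\<And>n. {a n..<b n} \<subseteq> {0..1}"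
  shows "(\<Union>k::int. \<Union>n. {a n + k..<b n + k}) \<inter> {0..<1} = (\<Union>n. {a n..<b n})"
proof (intro equalityI subsetI)
  fix x
  assume "x \<in> (\<Union>k::int. \<Union>n. {a n + k..<b n + k}) \<inter> {0..<1}"
  then obtain k :: int and n where x: "a n + k \<le> x" "x < b n + k" "0 \<le> x" "x < 1"
    by auto
  then have "0 \<le> a n" "b n \<le> 1"
    using assms[of n] by (auto simp: atLeastLessThan_subseteq_atLeastAtMost_iff)
  with x have "k = 0"
    by linarith
  with x show "x \<in> (\<Union>n. {a n..<b n})"
    by auto
next
  fix x
  assume "x \<in> (\<Union>n. {a n..<b n})"
  then obtain n where x: "a n \<le> x" "x < b n"
    by auto
  then have "0 \<le> a n" "b n \<le> 1"
    using assms[of n] by (auto simp: atLeastLessThan_subseteq_atLeastAtMost_iff)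
  with x show "x \<in> (\<Union>k::int. \<Union>n. {a n + k..<b n + k}) \<inter> {0..<1}"
    by (auto intro!: exI[of _ 0] exI[of _ n])
qed

lemma sums_measure_disjoint_intervals:
  fixes a b :: "nat \<Rightarrow> real"
  assumes "disjoint_family (\<lambda>n. {a n..<b n})" and "\<And>n. a n \<le> b n"
    and "emeasure lborel (\<Union>n. {a n..<b n}) < \<infinity>"
  shows "(\<lambda>n. b n - a n) sums measure lborel (\<Union>n. {a n..<b n})"
proof -
  have "(\<lambda>n. measure lborel {a n..<b n}) sums measure lborel (\<Union>n. {a n..<b n})"
    by (rule measure_UNION) (use assms in auto)
  with assms(2) show ?thesis
    by simp
qed

lemma abs_diff_lt_four_mult:
  fixes P l q :: real
  assumes "0 \<le> P" "P \<le> 1" "0 \<le> l" "l \<le> 1" "0 < q" "q < 1"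
    and le: "\<bar>P - l\<bar> \<le> 2 * q / (1 - q) * l"
  shows "\<bar>P - l\<bar> < 4 * q"
proof (cases "q > 1 / 4")
  case True
  with assms show ?thesis
    by linarith
next
  case False
  define K where "K = 2 * q / (1 - q)"
  have "K \<le> 2 * q / (3 / 4)"
    unfolding K_def using False assms by (intro divide_left_mono) auto
  moreover have "K * l \<le> K"
    unfolding K_def using assms by (intro mult_left_le) auto
  ultimately show ?thesis
    using le assms by (simp add: K_def)
qed

theorem lemma4p2:
  fixes M :: "'s measure" and Z :: "'s \<Rightarrow> real"
    and alpha :: "nat \<Rightarrow> real" and a b :: "nat \<Rightarrow> real" and l :: real
  assumes "prob_space M"
    and "distributed M lborel Z std_normal_density"
    and "incseq alpha" and "\<And>N. alpha N > 0"
    and "filterlim alpha at_top sequentially"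
    and "\<And>n. a n \<le> b n"
    and "\<And>n. {a n..<b n} \<subseteq> {0..1}"
    and "disjoint_family (\<lambda>n. {a n..<b n})"
    and "(\<lambda>n. b n - a n) sums l" and "l \<le> 1"
  shows "\<forall>N. \<bar>measure M {\<omega> \<in> space M. alpha N * Z \<omega> \<in>
              (\<Union>k::int. \<Union>n. {a n + of_int k..<b n + of_int k})} - l\<bar>
            < 4 * exp (- 2 * pi\<^sup>2 * (alpha N)\<^sup>2)"
proof
  fix N
  interpret prob_space M
    by fact
  let ?S = "\<Union>n. {a n..<b n}"
  let ?P = "measure M {\<omega> \<in> space M. alpha N * Z \<omega> \<in> (\<Union>k::int. \<Union>n. {a n + of_int k..<b n + of_int k})}"
  have "emeasure lborel ?S \<le> emeasure lborel {0..1::real}"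
    using assms(7) by (intro emeasure_mono) auto
  then have finite: "emeasure lborel ?S < \<infinity>"
    by (simp add: le_less_trans)
  have l: "measure lborel ?S = l"
    using sums_measure_disjoint_intervals[OF assms(8,6) finite] assms(9) sums_unique2 by blast
  have "?P = (LBINT x:?S. theta_series (alpha N) x)"
    using prob_scaled_std_normal_in_periodic_set[OF assms(1,2,4) _ periodic_union_shift_iff]
      periodic_union_Int_unit[OF assms(7)] by simp
  then have "\<bar>?P - l\<bar> \<le> 2 * exp (- 2 * pi\<^sup>2 * (alpha N)\<^sup>2) / (1 - exp (- 2 * pi\<^sup>2 * (alpha N)\<^sup>2)) * l"
    using abs_set_integral_theta_series_diff_measure_le[OF assms(4) _ finite] l by simp
  then show "\<bar>?P - l\<bar> < 4 * exp (- 2 * pi\<^sup>2 * (alpha N)\<^sup>2)"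
    using assms(4)[of N] assms(10) l by (intro abs_diff_lt_four_mult) auto
qed

end
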